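(* Let $G$ be a finite simple graph on $[n]$, $w:E(G)\to\mathbb Z_{>0}$ a weight function, $\Bbbk$ a field, $S=\Bbbk[x_1,\ldots,x_n]$ and $I(G_w)=\big((x_ix_j)^{w(i,j)}\mid\{i,j\}\in E(G)\big)$. Let $x^{\mathbf a}$ be a monomial not in $I(G_w)$ and let $U=\{i\mid\text{there exists } j \text{ with }\{i,j\}\in E(G)\text{ and } a_i<w(i,j)\le a_j\}$. Then $$\sqrt{I(G_w):x^{\mathbf a}}=I(G\setminus U)+(x_i\mid i\in U),$$ where $I(G\setminus U)$ is the edge ideal of the induced subgraph of $G$ on $[n]\setminus U$.
   Context: The edge ideal of a graph $H$ is $(x_ix_j\mid\{i,j\}\in E(H))$. $w(i,j)$ denotes the weight of edge $\{i,j\}$. *)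

theory Defs
  imports "HOL-Library.Poly_Mapping"
begin

type_synonym 'k mpoly = "(nat \<Rightarrow>\<^sub>0 nat) \<Rightarrow>\<^sub>0 'k"

definition polyring :: "nat \<Rightarrow> 'k::field mpoly set" where
  "polyring n = {p :: 'k mpoly. \<forall>m \<in> Poly_Mapping.keys p. Poly_Mapping.keys m \<subseteq> {1..n}}"

definition Var :: "nat \<Rightarrow> 'k::field mpoly" where
  "Var i = Poly_Mapping.single (Poly_Mapping.single i 1) 1"

definition monom :: "(nat \<Rightarrow>\<^sub>0 nat) \<Rightarrow> 'k::field mpoly" where
  "monom a = Poly_Mapping.single a 1"

definition ideal_gen :: "nat \<Rightarrow> 'k::field mpoly set \<Rightarrow> 'k mpoly set" where
  "ideal_gen n B = {(\<Sum>b\<in>F. c b * b) | F c. finite F \<and> F \<subseteq> B \<and> (\<forall>b\<in>F. c b \<in> polyring n)}"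

definition ideal_sum :: "'k::field mpoly set \<Rightarrow> 'k mpoly set \<Rightarrow> 'k mpoly set" where
  "ideal_sum I J = {f + g | f g. f \<in> I \<and> g \<in> J}"

definition colon :: "nat \<Rightarrow> 'k::field mpoly set \<Rightarrow> 'k mpoly \<Rightarrow> 'k mpoly set" where
  "colon n I f = {g \<in> polyring n. g * f \<in> I}"

definition radical :: "nat \<Rightarrow> 'k::field mpoly set \<Rightarrow> 'k mpoly set" where
  "radical n I = {g \<in> polyring n. \<exists>m::nat. g ^ m \<in> I}"

definition simple_graph_on :: "nat \<Rightarrow> nat set set \<Rightarrow> bool" where
  "simple_graph_on n E \<longleftrightarrow> (\<forall>e\<in>E. \<exists>i j. e = {i, j} \<and> i \<noteq> j \<and> i \<in> {1..n} \<and> j \<in> {1..n})"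

definition edge_ideal :: "nat \<Rightarrow> nat set set \<Rightarrow> 'k::field mpoly set" where
  "edge_ideal n E = ideal_gen n {Var i * Var j | i j. {i, j} \<in> E}"

definition weighted_edge_ideal :: "nat \<Rightarrow> nat set set \<Rightarrow> (nat set \<Rightarrow> nat) \<Rightarrow> 'k::field mpoly set" where
  "weighted_edge_ideal n E w = ideal_gen n {(Var i * Var j) ^ w {i, j} | i j. {i, j} \<in> E}"

definition induced_edges :: "nat set set \<Rightarrow> nat set \<Rightarrow> nat set set" where
  "induced_edges E V = {e \<in> E. e \<subseteq> V}"

end

theory Submission
  imports Defs
begin

(* All ideals in the statement are monomial ideals, and a polynomial lies in the ideal generated
   by monomials x^s (s in M) iff each of its terms is divisible by some x^s.  Taking the colon by
   x^a replaces each exponent s by s - a, and taking the radical replaces x^s by the squarefree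
   monomial on the support of s, because an ideal generated by variables is prime.  Hence the
   left-hand side is generated by the squarefree monomials on the sets
   T(e) = {i in e. a_i < w(e)}, e an edge, and the theorem becomes a comparison of set systems.
   Since x^a is not in I(G_w), no T(e) is empty; if T(e) = {i} then i is in U, and if T(e) = e then
   either an endpoint lies in U or e is an edge of G minus U.  Conversely an edge of G minus U
   contains its own T(e), and for i in U with witness j we have T({i,j}) = {i}. *)

section \<open>Exponent vectors\<close>

definition adds :: "('a \<Rightarrow>\<^sub>0 nat) \<Rightarrow> ('a \<Rightarrow>\<^sub>0 nat) \<Rightarrow> bool" where
  "adds s m \<longleftrightarrow> (\<forall>i. Poly_Mapping.lookup s i \<le> Poly_Mapping.lookup m i)"

lemma adds_refl [simp]: "adds s s"
  by (simp add: adds_def)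

lemma adds_trans: "adds s t \<Longrightarrow> adds t m \<Longrightarrow> adds s m"
  unfolding adds_def using order_trans by blast

lemma adds_add_left: "adds s m \<Longrightarrow> adds s (m' + m)"
  by (auto simp: adds_def lookup_add intro: trans_le_add2)

lemma adds_diff_add: "adds s m \<Longrightarrow> m - s + s = m"
  by (rule poly_mapping_eqI) (simp add: lookup_add lookup_minus adds_def)

lemma adds_add_iff_adds_diff: "adds s (m + a) \<longleftrightarrow> adds (s - a) m"
  by (simp add: adds_def lookup_add lookup_minus le_diff_conv)

lemma adds_keys_subset:
  assumes "adds s m"
  shows "Poly_Mapping.keys s \<subseteq> Poly_Mapping.keys m"
proof
  fix i assume "i \<in> Poly_Mapping.keys s"
  with assms show "i \<in> Poly_Mapping.keys m"
    unfolding adds_def in_keys_iff by (metis le_zero_eq)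
qed

lemma keys_add_nat:
  "Poly_Mapping.keys (m + m' :: 'a \<Rightarrow>\<^sub>0 nat) = Poly_Mapping.keys m \<union> Poly_Mapping.keys m'"
  by (auto simp: in_keys_iff lookup_add)

lemma keys_diff_nat: "Poly_Mapping.keys (m - s :: 'a \<Rightarrow>\<^sub>0 nat) \<subseteq> Poly_Mapping.keys m"
  by (auto simp: in_keys_iff lookup_minus)

definition uniform_exp :: "'a set \<Rightarrow> nat \<Rightarrow> 'a \<Rightarrow>\<^sub>0 nat" where
  "uniform_exp A k = (\<Sum>i\<in>A. Poly_Mapping.single i k)"

lemma lookup_uniform_exp:
  "finite A \<Longrightarrow> Poly_Mapping.lookup (uniform_exp A k) i = (if i \<in> A then k else 0)"
  by (simp add: uniform_exp_def lookup_sum lookup_single when_def sum.delta)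

lemma keys_uniform_exp_subset: "finite A \<Longrightarrow> Poly_Mapping.keys (uniform_exp A k) \<subseteq> A"
  by (auto simp: in_keys_iff lookup_uniform_exp split: if_splits)

lemma keys_uniform_exp_diff:
  "finite A \<Longrightarrow> Poly_Mapping.keys (uniform_exp A k - a) = {i \<in> A. Poly_Mapping.lookup a i < k}"
  by (auto simp: in_keys_iff lookup_minus lookup_uniform_exp split: if_splits)

lemma adds_uniform_exp_iff:
  "finite A \<Longrightarrow> adds (uniform_exp A k) m \<longleftrightarrow> (\<forall>i\<in>A. k \<le> Poly_Mapping.lookup m i)"
  by (auto simp: adds_def lookup_uniform_exp)

definition sqfree_exp :: "'a set \<Rightarrow> 'a \<Rightarrow>\<^sub>0 nat" where
  "sqfree_exp A = uniform_exp A 1"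

lemma adds_sqfree_exp_iff:
  "finite A \<Longrightarrow> adds (sqfree_exp A) m \<longleftrightarrow> A \<subseteq> Poly_Mapping.keys m"
  by (auto simp: sqfree_exp_def adds_uniform_exp_iff in_keys_iff Suc_le_eq)

lemma sqfree_exp_adds_iff:
  "finite A \<Longrightarrow> finite B \<Longrightarrow> adds (sqfree_exp A) (sqfree_exp B) \<longleftrightarrow> A \<subseteq> B"
  by (auto simp: sqfree_exp_def adds_uniform_exp_iff lookup_uniform_exp split: if_splits)

section \<open>Polynomials and generated ideals\<close>

definition vars_within :: "'a set \<Rightarrow> (('a \<Rightarrow>\<^sub>0 nat) \<Rightarrow>\<^sub>0 'b::zero) \<Rightarrow> bool" where
  "vars_within V p \<longleftrightarrow> (\<forall>m\<in>Poly_Mapping.keys p. Poly_Mapping.keys m \<subseteq> V)"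

lemma vars_within_add: "vars_within V p \<Longrightarrow> vars_within V q \<Longrightarrow> vars_within V (p + q)"
  unfolding vars_within_def using keys_add[of p q] by blast

lemma vars_within_mult:
  "vars_within V p \<Longrightarrow> vars_within V q \<Longrightarrow> vars_within V (p * q :: ('a \<Rightarrow>\<^sub>0 nat) \<Rightarrow>\<^sub>0 'b::semiring_0)"
  unfolding vars_within_def using keys_mult[of p q] by (fastforce simp: keys_add_nat)

lemma vars_within_one: "vars_within V (1 :: ('a \<Rightarrow>\<^sub>0 nat) \<Rightarrow>\<^sub>0 'b::zero_neq_one)"
  by (simp add: vars_within_def)

lemma vars_within_power:
  "vars_within V p \<Longrightarrow> vars_within V (p ^ k :: ('a \<Rightarrow>\<^sub>0 nat) \<Rightarrow>\<^sub>0 'b::semiring_1)"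
  by (induction k) (simp_all add: vars_within_mult vars_within_one)

lemma polyring_iff_vars_within: "p \<in> polyring n \<longleftrightarrow> vars_within {1..n} p"
  by (simp add: polyring_def vars_within_def)

lemma polyring_add: "p \<in> polyring n \<Longrightarrow> q \<in> polyring n \<Longrightarrow> p + q \<in> polyring n"
  by (simp add: polyring_iff_vars_within vars_within_add)

lemma polyring_mult: "p \<in> polyring n \<Longrightarrow> q \<in> polyring n \<Longrightarrow> p * q \<in> polyring n"
  by (simp add: polyring_iff_vars_within vars_within_mult)

lemma polyring_power: "p \<in> polyring n \<Longrightarrow> p ^ k \<in> polyring n"
  by (simp add: polyring_iff_vars_within vars_within_power)

lemma polyring_single:
  "Poly_Mapping.keys m \<subseteq> {1..n} \<Longrightarrow> Poly_Mapping.single m c \<in> polyring n"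
  by (simp add: polyring_def)

lemma polyring_zero [simp]: "0 \<in> polyring n"
  by (simp add: polyring_def)

lemma polyring_one [simp]: "1 \<in> polyring n"
  by (simp add: polyring_def)

lemma polyring_of_nat [simp]: "of_nat k \<in> polyring n"
  using polyring_single[of 0 n "of_nat k"] by simp

lemma sum_single_lookup: "(\<Sum>m\<in>Poly_Mapping.keys p. Poly_Mapping.single m (Poly_Mapping.lookup p m)) = p"
  by (rule poly_mapping_eqI)
    (simp add: lookup_sum lookup_single when_def sum.delta in_keys_iff)

lemma lookup_map_times:
  "Poly_Mapping.lookup (Poly_Mapping.map ((*) k) m) i = k * Poly_Mapping.lookup (m :: 'a \<Rightarrow>\<^sub>0 nat) i"
  by (cases "Poly_Mapping.lookup m i = 0") (simp_all add: Poly_Mapping.map.rep_eq)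

lemma single_power:
  "Poly_Mapping.single m c ^ k = Poly_Mapping.single (Poly_Mapping.map ((*) k) m) (c ^ k)"
proof (induction k)
  case 0
  have "Poly_Mapping.map ((*) 0) m = 0"
    by (rule poly_mapping_eqI) (simp add: lookup_map_times)
  then show ?case
    by (simp only: power_0 single_one)
next
  case (Suc k)
  have "m + Poly_Mapping.map ((*) k) m = Poly_Mapping.map ((*) (Suc k)) m"
    by (rule poly_mapping_eqI) (simp add: lookup_add lookup_map_times)
  then show ?case
    by (simp only: power_Suc Suc.IH mult_single)
qed

lemma ideal_gen_intro:
  "finite F \<Longrightarrow> F \<subseteq> B \<Longrightarrow> \<forall>b\<in>F. c b \<in> polyring n \<Longrightarrow> (\<Sum>b\<in>F. c b * b) \<in> ideal_gen n B"
  unfolding ideal_gen_def by blast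

lemma ideal_gen_zero: "0 \<in> ideal_gen n B"
  using ideal_gen_intro[of "{}"] by simp

lemma ideal_gen_add:
  assumes "p \<in> ideal_gen n B" "q \<in> ideal_gen n B"
  shows "p + q \<in> ideal_gen n B"
proof -
  obtain F c where p: "p = (\<Sum>b\<in>F. c b * b)" "finite F" "F \<subseteq> B" "\<forall>b\<in>F. c b \<in> polyring n"
    using assms(1) unfolding ideal_gen_def by blast
  obtain G d where q: "q = (\<Sum>b\<in>G. d b * b)" "finite G" "G \<subseteq> B" "\<forall>b\<in>G. d b \<in> polyring n"
    using assms(2) unfolding ideal_gen_def by blast
  define e where "e b = (if b \<in> F then c b else 0) + (if b \<in> G then d b else 0)" for b
  have "(\<Sum>b\<in>F \<union> G. e b * b)
      = (\<Sum>b\<in>F \<union> G. if b \<in> F then c b * b else 0) + (\<Sum>b\<in>F \<union> G. if b \<in> G then d b * b else 0)"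
    unfolding sum.distrib[symmetric] by (rule sum.cong) (auto simp: e_def distrib_right)
  also have "\<dots> = p + q"
    using p q by (simp add: sum.If_cases Int_absorb1 Int_absorb2)
  finally have "p + q = (\<Sum>b\<in>F \<union> G. e b * b)" ..
  moreover have "\<forall>b\<in>F \<union> G. e b \<in> polyring n"
    using p q by (auto simp: e_def intro!: polyring_add)
  ultimately show ?thesis
    using p q ideal_gen_intro[of "F \<union> G" B e n] by simp
qed

lemma ideal_gen_mult:
  assumes "r \<in> polyring n" "p \<in> ideal_gen n B"
  shows "r * p \<in> ideal_gen n B"
proof -
  obtain F c where p: "p = (\<Sum>b\<in>F. c b * b)" "finite F" "F \<subseteq> B" "\<forall>b\<in>F. c b \<in> polyring n"
    using assms(2) unfolding ideal_gen_def by blast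
  then have "r * p = (\<Sum>b\<in>F. (r * c b) * b)" "\<forall>b\<in>F. r * c b \<in> polyring n"
    using assms(1) by (simp_all add: sum_distrib_left mult.assoc polyring_mult)
  then show ?thesis
    using p ideal_gen_intro[of F B "\<lambda>b. r * c b" n] by simp
qed

lemma generator_in_ideal_gen: "b \<in> B \<Longrightarrow> b \<in> ideal_gen n B"
  using ideal_gen_intro[of "{b}" B "\<lambda>_. 1"] by simp

lemma ideal_gen_sum:
  "finite A \<Longrightarrow> (\<And>x. x \<in> A \<Longrightarrow> f x \<in> ideal_gen n B) \<Longrightarrow> sum f A \<in> ideal_gen n B"
  by (induction A rule: finite_induct) (auto intro: ideal_gen_add ideal_gen_zero)

section \<open>Monomial ideals\<close>

definition monomial_ideal :: "nat \<Rightarrow> (nat \<Rightarrow>\<^sub>0 nat) set \<Rightarrow> 'k::field mpoly set" where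
  "monomial_ideal n M = {p \<in> polyring n. \<forall>m\<in>Poly_Mapping.keys p. \<exists>s\<in>M. adds s m}"

lemma monomial_ideal_zero: "0 \<in> monomial_ideal n M"
  by (simp add: monomial_ideal_def)

lemma monomial_ideal_add:
  "p \<in> monomial_ideal n M \<Longrightarrow> q \<in> monomial_ideal n M \<Longrightarrow> p + q \<in> monomial_ideal n M"
  unfolding monomial_ideal_def using keys_add[of p q] polyring_add by blast

lemma monomial_ideal_mult:
  assumes "r \<in> polyring n" "p \<in> monomial_ideal n M"
  shows "r * p \<in> monomial_ideal n M"
proof -
  have "\<exists>s\<in>M. adds s m" if m: "m \<in> Poly_Mapping.keys (r * p)" for m
  proof -
    obtain x y where "m = x + y" "y \<in> Poly_Mapping.keys p"
      using keys_mult[of r p] m by blast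
    then show ?thesis
      using assms(2) adds_add_left by (fastforce simp: monomial_ideal_def)
  qed
  with assms show ?thesis
    by (simp add: monomial_ideal_def polyring_mult)
qed

lemma monomial_ideal_sum:
  "finite A \<Longrightarrow> (\<And>x. x \<in> A \<Longrightarrow> f x \<in> monomial_ideal n M) \<Longrightarrow> sum f A \<in> monomial_ideal n M"
  by (induction A rule: finite_induct) (auto intro: monomial_ideal_add monomial_ideal_zero)

lemma single_in_monomial_ideal:
  "Poly_Mapping.keys m \<subseteq> {1..n} \<Longrightarrow> s \<in> M \<Longrightarrow> adds s m \<Longrightarrow> Poly_Mapping.single m c \<in> monomial_ideal n M"
  by (auto simp: monomial_ideal_def polyring_single)

lemma monom_in_monomial_ideal_iff:
  "Poly_Mapping.keys a \<subseteq> {1..n} \<Longrightarrow> monom a \<in> monomial_ideal n M \<longleftrightarrow> (\<exists>s\<in>M. adds s a)"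
  by (simp add: monomial_ideal_def monom_def polyring_single)

lemma monomial_ideal_mono:
  "(\<And>s. s \<in> M \<Longrightarrow> \<exists>t\<in>M'. adds t s) \<Longrightarrow> monomial_ideal n M \<subseteq> monomial_ideal n M'"
  unfolding monomial_ideal_def by (blast intro: adds_trans)

lemma ideal_gen_monom_eq_monomial_ideal:
  assumes "\<forall>s\<in>M. Poly_Mapping.keys s \<subseteq> {1..n}"
  shows "ideal_gen n (monom ` M) = (monomial_ideal n M :: 'k::field mpoly set)"
proof
  show "ideal_gen n (monom ` M) \<subseteq> (monomial_ideal n M :: 'k mpoly set)"
  proof
    fix p :: "'k mpoly" assume "p \<in> ideal_gen n (monom ` M)"
    then obtain F c where p: "p = (\<Sum>b\<in>F. c b * b)" "finite F" "F \<subseteq> monom ` M"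
      "\<forall>b\<in>F. c b \<in> polyring n"
      unfolding ideal_gen_def by blast
    have "b \<in> monomial_ideal n M" if b: "b \<in> F" for b
    proof -
      obtain s where "s \<in> M" "b = monom s"
        using p(3) b by blast
      with assms show ?thesis
        by (simp add: monom_def single_in_monomial_ideal)
    qed
    then have "(\<Sum>b\<in>F. c b * b) \<in> monomial_ideal n M"
      using p(2,4) by (intro monomial_ideal_sum monomial_ideal_mult) auto
    with p(1) show "p \<in> monomial_ideal n M" by simp
  qed
next
  show "(monomial_ideal n M :: 'k mpoly set) \<subseteq> ideal_gen n (monom ` M)"
  proof
    fix p :: "'k mpoly" assume p: "p \<in> monomial_ideal n M"
    have "Poly_Mapping.single m (Poly_Mapping.lookup p m) \<in> ideal_gen n (monom ` M)"
      if m: "m \<in> Poly_Mapping.keys p" for m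
    proof -
      obtain s where s: "s \<in> M" "adds s m"
        using p m by (auto simp: monomial_ideal_def)
      have "Poly_Mapping.keys (m - s) \<subseteq> {1..n}"
        using p m keys_diff_nat[of m s] by (auto simp: monomial_ideal_def polyring_def)
      then have "Poly_Mapping.single (m - s) (Poly_Mapping.lookup p m) * monom s \<in> ideal_gen n (monom ` M)"
        using s(1) by (intro ideal_gen_mult polyring_single generator_in_ideal_gen) auto
      then show ?thesis
        by (simp add: monom_def mult_single adds_diff_add[OF s(2)])
    qed
    then have "(\<Sum>m\<in>Poly_Mapping.keys p. Poly_Mapping.single m (Poly_Mapping.lookup p m))
        \<in> ideal_gen n (monom ` M)"
      by (simp add: ideal_gen_sum)
    then show "p \<in> ideal_gen n (monom ` M)"
      by (simp only: sum_single_lookup)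
  qed
qed

lemma lookup_mult_monom_add:
  "Poly_Mapping.lookup (g * monom a) (m + a) = Poly_Mapping.lookup g m"
proof -
  have "g * monom a = (\<Sum>k\<in>Poly_Mapping.keys g. Poly_Mapping.single (k + a) (Poly_Mapping.lookup g k))"
    by (subst (1) sum_single_lookup[symmetric]) (simp add: sum_distrib_right monom_def mult_single)
  then show ?thesis
    by (simp add: lookup_sum lookup_single when_def in_keys_iff)
qed

lemma keys_mult_monom: "Poly_Mapping.keys (g * monom a) = (\<lambda>m. m + a) ` Poly_Mapping.keys g"
proof
  show "Poly_Mapping.keys (g * monom a) \<subseteq> (\<lambda>m. m + a) ` Poly_Mapping.keys g"
    using keys_mult[of g "monom a"] by (auto simp: monom_def)
  show "(\<lambda>m. m + a) ` Poly_Mapping.keys g \<subseteq> Poly_Mapping.keys (g * monom a)"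
    by (auto simp: in_keys_iff lookup_mult_monom_add)
qed

lemma colon_monomial_ideal:
  assumes "Poly_Mapping.keys a \<subseteq> {1..n}"
  shows "colon n (monomial_ideal n M) (monom a) = monomial_ideal n ((\<lambda>s. s - a) ` M)"
proof -
  have "monom a \<in> polyring n"
    using assms by (simp add: monom_def polyring_single)
  then show ?thesis
    unfolding colon_def monomial_ideal_def using polyring_mult
    by (auto simp: keys_mult_monom adds_add_iff_adds_diff)
qed

definition restrict_terms :: "('a \<Rightarrow> bool) \<Rightarrow> ('a \<Rightarrow>\<^sub>0 'b::zero) \<Rightarrow> 'a \<Rightarrow>\<^sub>0 'b" where
  "restrict_terms P p = Poly_Mapping.mapp (\<lambda>m c. if P m then c else 0) p"

lemma lookup_restrict_terms:
  "Poly_Mapping.lookup (restrict_terms P p) m = (if P m then Poly_Mapping.lookup p m else 0)"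
  by (simp add: restrict_terms_def lookup_mapp in_keys_iff when_def)

lemma keys_restrict_terms: "Poly_Mapping.keys (restrict_terms P p) = {m \<in> Poly_Mapping.keys p. P m}"
  by (auto simp: in_keys_iff lookup_restrict_terms split: if_splits)

lemma restrict_terms_add_compl:
  "restrict_terms P p + restrict_terms (\<lambda>m. \<not> P m) p = (p :: 'a \<Rightarrow>\<^sub>0 'b::monoid_add)"
  by (rule poly_mapping_eqI) (simp add: lookup_add lookup_restrict_terms)

lemma ideal_sum_monomial_ideal:
  "ideal_sum (monomial_ideal n M) (monomial_ideal n M') = (monomial_ideal n (M \<union> M') :: 'k::field mpoly set)"
proof
  have "monomial_ideal n M \<subseteq> (monomial_ideal n (M \<union> M') :: 'k mpoly set)"
    "monomial_ideal n M' \<subseteq> (monomial_ideal n (M \<union> M') :: 'k mpoly set)"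
    by (auto intro!: monomial_ideal_mono intro: adds_refl)
  then show "ideal_sum (monomial_ideal n M) (monomial_ideal n M') \<subseteq> (monomial_ideal n (M \<union> M') :: 'k mpoly set)"
    unfolding ideal_sum_def by (blast intro: monomial_ideal_add)
next
  show "monomial_ideal n (M \<union> M') \<subseteq> ideal_sum (monomial_ideal n M) (monomial_ideal n M' :: 'k mpoly set)"
  proof
    fix p :: "'k mpoly" assume p: "p \<in> monomial_ideal n (M \<union> M')"
    define P where "P m \<longleftrightarrow> (\<exists>s\<in>M. adds s m)" for m
    have "restrict_terms P p \<in> monomial_ideal n M" "restrict_terms (\<lambda>m. \<not> P m) p \<in> monomial_ideal n M'"
      using p by (auto simp: monomial_ideal_def polyring_def keys_restrict_terms P_def)
    then show "p \<in> ideal_sum (monomial_ideal n M) (monomial_ideal n M')"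
      unfolding ideal_sum_def using restrict_terms_add_compl[of P p, symmetric] by blast
  qed
qed

definition in_var_ideal :: "'a set \<Rightarrow> (('a \<Rightarrow>\<^sub>0 nat) \<Rightarrow>\<^sub>0 'b::zero) \<Rightarrow> bool" where
  "in_var_ideal C p \<longleftrightarrow> (\<forall>m\<in>Poly_Mapping.keys p. Poly_Mapping.keys m \<inter> C \<noteq> {})"

lemma in_var_ideal_mult:
  "in_var_ideal C p \<Longrightarrow> in_var_ideal C (p * q :: ('a \<Rightarrow>\<^sub>0 nat) \<Rightarrow>\<^sub>0 'b::semiring_0)"
  unfolding in_var_ideal_def using keys_mult[of p q] by (fastforce simp: keys_add_nat)

lemma in_var_ideal_diff:
  "in_var_ideal C p \<Longrightarrow> in_var_ideal C q \<Longrightarrow> in_var_ideal C (p - q :: ('a \<Rightarrow>\<^sub>0 nat) \<Rightarrow>\<^sub>0 'b::ab_group_add)"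
  unfolding in_var_ideal_def using keys_diff[of p q] by blast

(* The terms of g avoiding C form a nonzero polynomial g1, and g1 ^ k agrees with g ^ k
   modulo the ideal generated by C while still avoiding C. *)
lemma in_var_ideal_power_imp:
  fixes g :: "'k::field mpoly"
  assumes "in_var_ideal C (g ^ k)"
  shows "in_var_ideal C g"
proof (rule ccontr)
  define g1 where "g1 = restrict_terms (\<lambda>m. Poly_Mapping.keys m \<inter> C = {}) g"
  define g0 where "g0 = restrict_terms (\<lambda>m. Poly_Mapping.keys m \<inter> C \<noteq> {}) g"
  assume "\<not> in_var_ideal C g"
  then have "g1 \<noteq> 0"
    by (auto simp: in_var_ideal_def g1_def keys_restrict_terms simp flip: keys_eq_empty)
  then have "g1 ^ k \<noteq> 0"
    by simp
  then obtain m where m: "m \<in> Poly_Mapping.keys (g1 ^ k)"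
    by (metis ex_in_conv keys_eq_empty)
  have "g - g1 = g0"
    using restrict_terms_add_compl[of "\<lambda>m. Poly_Mapping.keys m \<inter> C = {}" g]
    by (simp add: g0_def g1_def algebra_simps)
  then obtain r where "g ^ k - g1 ^ k = g0 * r"
    using power_diff_sumr2[of g k g1] by blast
  then have "g1 ^ k = g ^ k - g0 * r"
    by (simp add: algebra_simps)
  moreover have "in_var_ideal C g0"
    by (simp add: in_var_ideal_def g0_def keys_restrict_terms)
  ultimately have "in_var_ideal C (g1 ^ k)"
    using assms by (simp add: in_var_ideal_diff in_var_ideal_mult)
  moreover have "vars_within (- C) (g1 ^ k)"
    by (intro vars_within_power) (auto simp: vars_within_def g1_def keys_restrict_terms)
  ultimately show False
    using m by (auto simp: in_var_ideal_def vars_within_def)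
qed

lemma power_in_monomial_ideal_keys:
  fixes g :: "'k::field mpoly"
  assumes "g ^ k \<in> monomial_ideal n M" "m0 \<in> Poly_Mapping.keys g"
  shows "\<exists>s\<in>M. Poly_Mapping.keys s \<subseteq> Poly_Mapping.keys m0"
proof (rule ccontr)
  assume none: "\<not> ?thesis"
  have "in_var_ideal (- Poly_Mapping.keys m0) (g ^ k)"
    unfolding in_var_ideal_def
  proof
    fix m assume "m \<in> Poly_Mapping.keys (g ^ k)"
    then obtain s where "s \<in> M" "adds s m"
      using assms(1) by (auto simp: monomial_ideal_def)
    then show "Poly_Mapping.keys m \<inter> - Poly_Mapping.keys m0 \<noteq> {}"
      using none adds_keys_subset by blast
  qed
  then have "in_var_ideal (- Poly_Mapping.keys m0) g"
    by (rule in_var_ideal_power_imp)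
  with assms(2) show False
    by (auto simp: in_var_ideal_def)
qed

lemma radical_monomial_ideal_add:
  assumes "p \<in> radical n (monomial_ideal n M)" "q \<in> radical n (monomial_ideal n M)"
  shows "p + q \<in> radical n (monomial_ideal n M)"
proof -
  obtain a b where p: "p \<in> polyring n" "p ^ a \<in> monomial_ideal n M"
    and q: "q \<in> polyring n" "q ^ b \<in> monomial_ideal n M"
    using assms by (auto simp: radical_def)
  have "of_nat (a + b choose k) * p ^ k * q ^ (a + b - k) \<in> monomial_ideal n M" for k
  proof (cases "a \<le> k")
    case True
    then have "p ^ k = p ^ (k - a) * p ^ a"
      by (simp flip: power_add)
    then have "of_nat (a + b choose k) * p ^ k * q ^ (a + b - k)
        = (of_nat (a + b choose k) * p ^ (k - a) * q ^ (a + b - k)) * p ^ a"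
      by (simp add: mult_ac)
    also have "\<dots> \<in> monomial_ideal n M"
      using p q by (intro monomial_ideal_mult polyring_mult polyring_power) simp_all
    finally show ?thesis .
  next
    case False
    then have "q ^ (a + b - k) = q ^ (a - k) * q ^ b"
      by (simp flip: power_add)
    then have "of_nat (a + b choose k) * p ^ k * q ^ (a + b - k)
        = (of_nat (a + b choose k) * p ^ k * q ^ (a - k)) * q ^ b"
      by (simp add: mult_ac)
    also have "\<dots> \<in> monomial_ideal n M"
      using p q by (intro monomial_ideal_mult polyring_mult polyring_power) simp_all
    finally show ?thesis .
  qed
  then have "(p + q) ^ (a + b) \<in> monomial_ideal n M"
    by (simp add: binomial_ring monomial_ideal_sum)
  with p q show ?thesis
    by (auto simp: radical_def polyring_add)
qed

lemma radical_monomial_ideal_sum: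
  "finite A \<Longrightarrow> (\<And>x. x \<in> A \<Longrightarrow> f x \<in> radical n (monomial_ideal n M))
    \<Longrightarrow> sum f A \<in> radical n (monomial_ideal n M)"
proof (induction A rule: finite_induct)
  case empty
  show ?case
    using monomial_ideal_zero[of n M] by (auto simp: radical_def intro!: exI[of _ 1])
qed (simp add: radical_monomial_ideal_add)

lemma single_in_radical_monomial_ideal:
  assumes "Poly_Mapping.keys m \<subseteq> {1..n}" "s \<in> M" "Poly_Mapping.keys s \<subseteq> Poly_Mapping.keys m"
  shows "Poly_Mapping.single m c \<in> radical n (monomial_ideal n M)"
proof -
  define K where "K = (\<Sum>i\<in>Poly_Mapping.keys s. Poly_Mapping.lookup s i)"
  have "Poly_Mapping.lookup s i \<le> K * Poly_Mapping.lookup m i" for i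
  proof (cases "i \<in> Poly_Mapping.keys s")
    case True
    then have "i \<in> Poly_Mapping.keys m"
      using assms(3) by blast
    with True have "Poly_Mapping.lookup s i \<le> K" "1 \<le> Poly_Mapping.lookup m i"
      by (auto simp: K_def member_le_sum in_keys_iff)
    then show ?thesis
      using mult_le_mono by fastforce
  qed (simp add: in_keys_iff)
  then have "adds s (Poly_Mapping.map ((*) K) m)"
    by (simp add: adds_def lookup_map_times)
  moreover have "Poly_Mapping.keys (Poly_Mapping.map ((*) K) m) \<subseteq> {1..n}"
    using assms(1) by (auto simp: in_keys_iff lookup_map_times)
  ultimately have "Poly_Mapping.single m c ^ K \<in> monomial_ideal n M"
    unfolding single_power using assms(2) single_in_monomial_ideal by blast
  then show ?thesis
    using assms(1) by (auto simp: radical_def polyring_single)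
qed

lemma radical_monomial_ideal:
  "radical n (monomial_ideal n M) = (monomial_ideal n ((\<lambda>s. sqfree_exp (Poly_Mapping.keys s)) ` M) :: 'k::field mpoly set)"
proof
  show "radical n (monomial_ideal n M) \<subseteq> (monomial_ideal n ((\<lambda>s. sqfree_exp (Poly_Mapping.keys s)) ` M) :: 'k mpoly set)"
  proof
    fix g :: "'k mpoly" assume "g \<in> radical n (monomial_ideal n M)"
    then obtain k where g: "g \<in> polyring n" "g ^ k \<in> monomial_ideal n M"
      by (auto simp: radical_def)
    have "\<exists>s\<in>M. Poly_Mapping.keys s \<subseteq> Poly_Mapping.keys m" if "m \<in> Poly_Mapping.keys g" for m
      using g(2) that by (rule power_in_monomial_ideal_keys)
    then have "\<forall>m\<in>Poly_Mapping.keys g. \<exists>s\<in>M. adds (sqfree_exp (Poly_Mapping.keys s)) m"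
      by (simp add: adds_sqfree_exp_iff)
    with g(1) show "g \<in> monomial_ideal n ((\<lambda>s. sqfree_exp (Poly_Mapping.keys s)) ` M)"
      unfolding monomial_ideal_def by blast
  qed
next
  show "(monomial_ideal n ((\<lambda>s. sqfree_exp (Poly_Mapping.keys s)) ` M) :: 'k mpoly set) \<subseteq> radical n (monomial_ideal n M)"
  proof
    fix g :: "'k mpoly"
    assume g: "g \<in> monomial_ideal n ((\<lambda>s. sqfree_exp (Poly_Mapping.keys s)) ` M)"
    have "Poly_Mapping.single m (Poly_Mapping.lookup g m) \<in> radical n (monomial_ideal n M)"
      if m: "m \<in> Poly_Mapping.keys g" for m
    proof -
      obtain s where "s \<in> M" "adds (sqfree_exp (Poly_Mapping.keys s)) m"
        using g m unfolding monomial_ideal_def by blast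
      moreover have "Poly_Mapping.keys m \<subseteq> {1..n}"
        using g m by (simp add: monomial_ideal_def polyring_def)
      ultimately show ?thesis
        by (simp add: adds_sqfree_exp_iff single_in_radical_monomial_ideal)
    qed
    then have "(\<Sum>m\<in>Poly_Mapping.keys g. Poly_Mapping.single m (Poly_Mapping.lookup g m))
        \<in> radical n (monomial_ideal n M)"
      by (simp add: radical_monomial_ideal_sum)
    then show "g \<in> radical n (monomial_ideal n M)"
      by (simp only: sum_single_lookup)
  qed
qed

lemma monomial_ideal_sqfree_eqI:
  assumes "\<forall>A\<in>F. finite A" "\<forall>B\<in>G. finite B"
    and "\<forall>A\<in>F. \<exists>B\<in>G. B \<subseteq> A" "\<forall>B\<in>G. \<exists>A\<in>F. A \<subseteq> B"
  shows "monomial_ideal n (sqfree_exp ` F) = monomial_ideal n (sqfree_exp ` G)"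
  using assms by (intro equalityI monomial_ideal_mono) (auto simp: sqfree_exp_adds_iff)

section \<open>Weighted edge ideals\<close>

lemma simple_graph_on_edgeD:
  "simple_graph_on n E \<Longrightarrow> e \<in> E \<Longrightarrow> \<exists>i j. e = {i, j} \<and> i \<noteq> j \<and> i \<in> {1..n} \<and> j \<in> {1..n}"
  by (simp add: simple_graph_on_def)

lemma simple_graph_on_edge_subset: "simple_graph_on n E \<Longrightarrow> e \<in> E \<Longrightarrow> e \<subseteq> {1..n}"
  by (auto dest: simple_graph_on_edgeD)

lemma simple_graph_on_finite_edge: "simple_graph_on n E \<Longrightarrow> e \<in> E \<Longrightarrow> finite e"
  by (auto dest: simple_graph_on_edgeD)

lemma simple_graph_on_edge_neq: "simple_graph_on n E \<Longrightarrow> {i, j} \<in> E \<Longrightarrow> i \<noteq> j"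
  by (auto dest: simple_graph_on_edgeD simp: doubleton_eq_iff)

lemma simple_graph_on_induced_edges: "simple_graph_on n E \<Longrightarrow> simple_graph_on n (induced_edges E V)"
  by (simp add: simple_graph_on_def induced_edges_def)

lemma Var_mult_Var_power:
  assumes "i \<noteq> j"
  shows "(Var i * Var j :: 'k::field mpoly) ^ k = monom (uniform_exp {i, j} k)"
proof -
  have "Poly_Mapping.map ((*) k) (Poly_Mapping.single i 1 + Poly_Mapping.single j 1) = uniform_exp {i, j} k"
    using assms by (intro poly_mapping_eqI) (simp add: lookup_map_times lookup_add lookup_single lookup_uniform_exp when_def)
  then show ?thesis
    by (simp add: Var_def monom_def mult_single single_power)
qed

lemma weighted_edge_ideal_eq_monomial_ideal:
  assumes "simple_graph_on n E"
  shows "weighted_edge_ideal n E w = (monomial_ideal n ((\<lambda>e. uniform_exp e (w e)) ` E) :: 'k::field mpoly set)"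
proof -
  have gens: "{(Var i * Var j :: 'k mpoly) ^ w {i, j} | i j. {i, j} \<in> E} = monom ` (\<lambda>e. uniform_exp e (w e)) ` E"
  proof (intro equalityI subsetI)
    fix x :: "'k mpoly" assume "x \<in> {(Var i * Var j) ^ w {i, j} | i j. {i, j} \<in> E}"
    then obtain i j where "{i, j} \<in> E" "x = (Var i * Var j) ^ w {i, j}"
      by blast
    then show "x \<in> monom ` (\<lambda>e. uniform_exp e (w e)) ` E"
      using assms by (simp add: Var_mult_Var_power simple_graph_on_edge_neq)
  next
    fix x :: "'k mpoly" assume "x \<in> monom ` (\<lambda>e. uniform_exp e (w e)) ` E"
    then obtain e where e: "e \<in> E" "x = monom (uniform_exp e (w e))"
      by blast
    with assms obtain i j where "e = {i, j}" "i \<noteq> j"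
      by (blast dest: simple_graph_on_edgeD)
    with e have "x = (Var i * Var j) ^ w {i, j} \<and> {i, j} \<in> E"
      by (simp add: Var_mult_Var_power)
    then show "x \<in> {(Var i * Var j) ^ w {i, j} | i j. {i, j} \<in> E}"
      by blast
  qed
  have "Poly_Mapping.keys (uniform_exp e (w e)) \<subseteq> {1..n}" if "e \<in> E" for e
    using keys_uniform_exp_subset[OF simple_graph_on_finite_edge[OF assms that]]
      simple_graph_on_edge_subset[OF assms that] by blast
  then show ?thesis
    unfolding weighted_edge_ideal_def gens by (intro ideal_gen_monom_eq_monomial_ideal) blast
qed

lemma monom_in_weighted_edge_ideal_iff:
  assumes "simple_graph_on n E" "Poly_Mapping.keys a \<subseteq> {1..n}"
  shows "(monom a :: 'k::field mpoly) \<in> weighted_edge_ideal n E w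
    \<longleftrightarrow> (\<exists>e\<in>E. \<forall>i\<in>e. w e \<le> Poly_Mapping.lookup a i)"
  using assms simple_graph_on_finite_edge[OF assms(1)]
  by (simp add: weighted_edge_ideal_eq_monomial_ideal monom_in_monomial_ideal_iff adds_uniform_exp_iff)

lemma radical_colon_weighted_edge_ideal:
  assumes "simple_graph_on n E" "Poly_Mapping.keys a \<subseteq> {1..n}"
  shows "radical n (colon n (weighted_edge_ideal n E w) (monom a))
    = (monomial_ideal n (sqfree_exp ` (\<lambda>e. {i \<in> e. Poly_Mapping.lookup a i < w e}) ` E) :: 'k::field mpoly set)"
proof -
  have "(\<lambda>e. sqfree_exp (Poly_Mapping.keys (uniform_exp e (w e) - a))) ` E
      = sqfree_exp ` (\<lambda>e. {i \<in> e. Poly_Mapping.lookup a i < w e}) ` E"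
    unfolding image_image using simple_graph_on_finite_edge[OF assms(1)]
    by (intro image_cong) (simp_all add: keys_uniform_exp_diff)
  then show ?thesis
    by (simp add: weighted_edge_ideal_eq_monomial_ideal[OF assms(1)] colon_monomial_ideal[OF assms(2)]
        radical_monomial_ideal image_image)
qed

lemma sqfree_exp_singleton: "sqfree_exp {i} = Poly_Mapping.single i 1"
  by (simp add: sqfree_exp_def uniform_exp_def)

lemma edge_ideal_eq_monomial_ideal:
  assumes "simple_graph_on n E"
  shows "edge_ideal n E = (monomial_ideal n (sqfree_exp ` E) :: 'k::field mpoly set)"
proof -
  have "edge_ideal n E = (weighted_edge_ideal n E (\<lambda>_. 1) :: 'k mpoly set)"
    by (simp add: edge_ideal_def weighted_edge_ideal_def)
  then show ?thesis
    unfolding sqfree_exp_def using weighted_edge_ideal_eq_monomial_ideal[OF assms] by simp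
qed

lemma ideal_gen_Var_eq_monomial_ideal:
  assumes "U \<subseteq> {1..n}"
  shows "ideal_gen n (Var ` U) = (monomial_ideal n (sqfree_exp ` (\<lambda>i. {i}) ` U) :: 'k::field mpoly set)"
proof -
  have "(Var ` U :: 'k mpoly set) = monom ` sqfree_exp ` (\<lambda>i. {i}) ` U"
    by (simp add: image_image Var_def monom_def sqfree_exp_singleton)
  moreover have "\<forall>s\<in>sqfree_exp ` (\<lambda>i. {i}) ` U. Poly_Mapping.keys s \<subseteq> {1..n}"
    using assms by (auto simp: sqfree_exp_singleton)
  ultimately show ?thesis
    by (simp add: ideal_gen_monom_eq_monomial_ideal)
qed

definition deficient_vertices :: "nat set set \<Rightarrow> (nat set \<Rightarrow> nat) \<Rightarrow> (nat \<Rightarrow> nat) \<Rightarrow> nat set" where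
  "deficient_vertices E w a = {i. \<exists>j. {i, j} \<in> E \<and> a i < w {i, j} \<and> w {i, j} \<le> a j}"

lemma deficient_vertices_subset: "simple_graph_on n E \<Longrightarrow> deficient_vertices E w a \<subseteq> {1..n}"
  unfolding deficient_vertices_def using simple_graph_on_edge_subset by blast

lemma deficit_contains_generator:
  assumes "simple_graph_on n E" "e \<in> E" "\<exists>i\<in>e. a i < w e"
  defines "U \<equiv> deficient_vertices E w a"
  shows "\<exists>B \<in> induced_edges E ({1..n} - U) \<union> (\<lambda>i. {i}) ` U. B \<subseteq> {i \<in> e. a i < w e}"
proof -
  obtain i j where e: "e = {i, j}" "i \<noteq> j"
    using simple_graph_on_edgeD[OF assms(1,2)] by blast
  have deficient: "k \<in> U" if "{k, l} = e" "a k < w e" "w e \<le> a l" for k l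
    using that assms(2) unfolding U_def deficient_vertices_def by auto
  have "a i < w e \<or> j \<in> U \<and> a j < w e" "a j < w e \<or> i \<in> U \<and> a i < w e"
    using assms(3) e deficient[of j i] deficient[of i j] by (auto simp: insert_commute)
  then consider "i \<in> U" "a i < w e" | "j \<in> U" "a j < w e" | "i \<notin> U" "j \<notin> U" "a i < w e" "a j < w e"
    by blast
  then show ?thesis
  proof cases
    case 3
    then have "e \<in> induced_edges E ({1..n} - U)"
      using assms(2) simple_graph_on_edge_subset[OF assms(1,2)] e by (auto simp: induced_edges_def)
    with 3 e show ?thesis by blast
  qed (use e in auto)
qed

lemma generator_contains_deficit:
  assumes "B \<in> induced_edges E V \<union> (\<lambda>i. {i}) ` deficient_vertices E w a"
  shows "\<exists>e\<in>E. {i \<in> e. a i < w e} \<subseteq> B"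
proof -
  consider "B \<in> E"
    | i j where "B = {i}" "{i, j} \<in> E" "a i < w {i, j}" "w {i, j} \<le> a j"
    using assms unfolding induced_edges_def deficient_vertices_def by blast
  then show ?thesis
  proof cases
    case (2 i j)
    then show ?thesis
      by (intro bexI[of _ "{i, j}"]) auto
  qed blast
qed

lemma monomial_ideal_deficit_sets_eq:
  assumes "simple_graph_on n E" "\<forall>e\<in>E. \<exists>i\<in>e. a i < w e"
  defines "U \<equiv> deficient_vertices E w a"
  shows "monomial_ideal n (sqfree_exp ` (\<lambda>e. {i \<in> e. a i < w e}) ` E)
    = monomial_ideal n (sqfree_exp ` (induced_edges E ({1..n} - U) \<union> (\<lambda>i. {i}) ` U))"
proof (rule monomial_ideal_sqfree_eqI)
  show "\<forall>A\<in>(\<lambda>e. {i \<in> e. a i < w e}) ` E. finite A"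
    "\<forall>B\<in>induced_edges E ({1..n} - U) \<union> (\<lambda>i. {i}) ` U. finite B"
    using simple_graph_on_finite_edge[OF assms(1)] by (auto simp: induced_edges_def)
  show "\<forall>A\<in>(\<lambda>e. {i \<in> e. a i < w e}) ` E.
      \<exists>B\<in>induced_edges E ({1..n} - U) \<union> (\<lambda>i. {i}) ` U. B \<subseteq> A"
  proof
    fix A assume "A \<in> (\<lambda>e. {i \<in> e. a i < w e}) ` E"
    then obtain e where "e \<in> E" "A = {i \<in> e. a i < w e}"
      by blast
    then show "\<exists>B\<in>induced_edges E ({1..n} - U) \<union> (\<lambda>i. {i}) ` U. B \<subseteq> A"
      using deficit_contains_generator[OF assms(1)] assms(2) unfolding U_def by simp
  qed
  show "\<forall>B\<in>induced_edges E ({1..n} - U) \<union> (\<lambda>i. {i}) ` U.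
      \<exists>A\<in>(\<lambda>e. {i \<in> e. a i < w e}) ` E. A \<subseteq> B"
  proof
    fix B assume "B \<in> induced_edges E ({1..n} - U) \<union> (\<lambda>i. {i}) ` U"
    then obtain e where "e \<in> E" "{i \<in> e. a i < w e} \<subseteq> B"
      using generator_contains_deficit unfolding U_def by blast
    then show "\<exists>A\<in>(\<lambda>e. {i \<in> e. a i < w e}) ` E. A \<subseteq> B"
      by blast
  qed
qed

theorem lemma2p13:
  fixes n :: nat and E :: "nat set set" and w :: "nat set \<Rightarrow> nat"
    and a :: "nat \<Rightarrow>\<^sub>0 nat"
  assumes "simple_graph_on n E"
    and "\<forall>e\<in>E. w e > 0"
    and "Poly_Mapping.keys a \<subseteq> {1..n}"
    and "(monom a :: 'k::field mpoly) \<notin> weighted_edge_ideal n E w"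
  defines "U \<equiv> {i. \<exists>j. {i, j} \<in> E \<and> Poly_Mapping.lookup a i < w {i, j} \<and> w {i, j} \<le> Poly_Mapping.lookup a j}"
  shows "radical n (colon n (weighted_edge_ideal n E w) (monom a :: 'k mpoly))
         = ideal_sum (edge_ideal n (induced_edges E ({1..n} - U))) (ideal_gen n (Var ` U))"
proof -
  have U: "U = deficient_vertices E w (Poly_Mapping.lookup a)"
    by (simp add: U_def deficient_vertices_def)
  have deficit: "\<forall>e\<in>E. \<exists>i\<in>e. Poly_Mapping.lookup a i < w e"
    using assms(4) unfolding monom_in_weighted_edge_ideal_iff[OF assms(1,3)] by (auto simp: not_le)
  have "radical n (colon n (weighted_edge_ideal n E w) (monom a :: 'k mpoly))
      = monomial_ideal n (sqfree_exp ` (\<lambda>e. {i \<in> e. Poly_Mapping.lookup a i < w e}) ` E)"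
    by (rule radical_colon_weighted_edge_ideal[OF assms(1,3)])
  also have "\<dots> = monomial_ideal n (sqfree_exp ` (induced_edges E ({1..n} - U) \<union> (\<lambda>i. {i}) ` U))"
    unfolding U by (rule monomial_ideal_deficit_sets_eq[OF assms(1) deficit])
  also have "\<dots> = ideal_sum (edge_ideal n (induced_edges E ({1..n} - U))) (ideal_gen n (Var ` U))"
    using deficient_vertices_subset[OF assms(1)] unfolding U image_Un
    by (simp only: ideal_sum_monomial_ideal edge_ideal_eq_monomial_ideal[OF simple_graph_on_induced_edges[OF assms(1)]]
        ideal_gen_Var_eq_monomial_ideal)
  finally show ?thesis .
qed

end
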